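(* For every integer $k\geq 0$, the formal power series $G_k(x)$ satisfies $$G_k(x)=\frac{1+x\sum_{j=0}^{k-1}C(k,j)\bigl(4^{j}+(-1)^{k}(-4)^{j}\bigr)G_j(x)}{1-2^{k}(2^{k+1}+1)x},$$ where $C(k,j)=\binom{k}{j}$ (for $k=0$ this reads $G_0(x)=1/(1-3x)$).
   Context: The Stern polynomials $B_n(t)\in\mathbb{Z}[t]$ are defined by $B_0(t)=0$, $B_1(t)=1$, and for $n\geq 1$: $B_{2n}(t)=tB_n(t)$, $B_{2n+1}(t)=B_n(t)+B_{n+1}(t)$. For $n\geq1$ let $e(n)=\deg B_n(t)$. For each $n\ge0$ the set $\{a\geq1:\;e(a)=n\}$ is finite (it has $3^n$ elements). For $k,n\geq 0$ let $S_k(n)=\sum_{a\geq 1:\;e(a)=n}a^{k}$ and define the formal power series $G_k(x)=\sum_{a=1}^{\infty}a^{k}x^{e(a)}=\sum_{n=0}^{\infty}S_k(n)x^n$. *)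

theory Defs
  imports "HOL-Computational_Algebra.Computational_Algebra"
begin

function stern_poly :: "nat \<Rightarrow> int poly" where
  "stern_poly n =
     (if n = 0 then 0
      else if n = 1 then 1
      else if even n then [:0, 1:] * stern_poly (n div 2)
      else stern_poly (n div 2) + stern_poly (n div 2 + 1))"
  by auto
termination
  by (relation "measure id") (auto elim!: oddE)

definition stern_deg :: "nat \<Rightarrow> nat" where
  "stern_deg a = degree (stern_poly a)"

definition S :: "nat \<Rightarrow> nat \<Rightarrow> nat" where
  "S k n = (\<Sum>a \<in> {a. 1 \<le> a \<and> stern_deg a = n}. a ^ k)"

definition G :: "nat \<Rightarrow> rat fps" where
  "G k = Abs_fps (\<lambda>n. of_nat (S k n))"

end

theory Submission
  imports Defs
begin

(* Writing e(a) = deg B_a, the degree satisfies e(2a) = e(a) + 1 and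
   e(2a+1) = max (e a) (e (a+1)) because all Stern polynomials have nonnegative
   coefficients; together with |e(a+1) - e(a)| <= 1 this gives e(4a-1) = e(4a+1) = e(a) + 1.
   Hence the level sets  level n = {a >= 1. e a = n}  satisfy  level 0 = {1}  and
   level (n+1) = 2 level n  u  (4 level n - 1)  u  (4 level n + 1)  (a disjoint union),
   so  S_k(n+1) = sum over a in level n of (2a)^k + (4a-1)^k + (4a+1)^k.
   Expanding binomially,
     (2a)^k + (4a-1)^k + (4a+1)^k = 2^k (2^(k+1)+1) a^k + sum_{j<k} C(k,j)(4^j + (-1)^k (-4)^j) a^j,
   which yields the coefficient recurrence  S_k(n+1) = c_k S_k(n) + sum_{j<k} (...) S_j(n).
   In power series form this is  G_k = 1 + x (T + c_k G_k), and solving this linear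
   equation gives the theorem. *)

declare stern_poly.simps [simp del]

lemma stern_poly_1 [simp]: "stern_poly (Suc 0) = 1"
  by (subst stern_poly.simps) simp

lemma stern_poly_even: "n \<ge> 1 \<Longrightarrow> stern_poly (2 * n) = [:0, 1:] * stern_poly n"
  by (subst stern_poly.simps) simp

lemma stern_poly_odd: "n \<ge> 1 \<Longrightarrow> stern_poly (2 * n + 1) = stern_poly n + stern_poly (n + 1)"
  by (subst stern_poly.simps) simp

text \<open>Polynomials with nonnegative coefficients: no cancellation can occur in their sums.\<close>

definition nonneg_coeffs :: "'a::linordered_idom poly \<Rightarrow> bool" where
  "nonneg_coeffs p \<longleftrightarrow> (\<forall>i. 0 \<le> coeff p i)"

lemma nonneg_coeffs_add_eq_0:
  assumes "nonneg_coeffs p" "nonneg_coeffs q" "p + q = 0"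
  shows "p = 0"
proof (rule poly_eqI)
  fix i
  have "coeff p i + coeff q i = 0" using assms(3) by (metis coeff_add coeff_0)
  then show "coeff p i = coeff 0 i"
    using assms(1,2) unfolding nonneg_coeffs_def by (simp add: add_nonneg_eq_0_iff)
qed

(* The leading coefficient of the higher-degree summand survives. *)
lemma degree_add_nonneg_coeffs:
  assumes "nonneg_coeffs p" "nonneg_coeffs q"
  shows "degree (p + q) = max (degree p) (degree q)"
proof -
  have le: "degree (p + q) = degree p" if "nonneg_coeffs p" "nonneg_coeffs q" "degree q \<le> degree p"
    for p q :: "'a poly"
  proof (cases "p = 0")
    case False
    then have "coeff p (degree p) > 0"
      using that(1) unfolding nonneg_coeffs_def by (metis leading_coeff_0_iff order_le_less)
    then have "coeff (p + q) (degree p) \<noteq> 0"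
      using that(2) unfolding nonneg_coeffs_def by (metis add_pos_nonneg coeff_add less_irrefl)
    then have "degree p \<le> degree (p + q)" by (rule le_degree)
    with that(3) show ?thesis by (metis degree_add_le order_antisym order_refl)
  qed (use that in simp)
  show ?thesis
    using le[OF assms] le[OF assms(2,1)] by (cases "degree q \<le> degree p") (auto simp: add.commute)
qed

lemma nonneg_coeffs_stern_poly: "nonneg_coeffs (stern_poly n)"
proof (induction n rule: stern_poly.induct)
  case (1 n)
  then show ?case
    by (subst stern_poly.simps)
       (auto simp: nonneg_coeffs_def coeff_pCons split: nat.splits)
qed

lemma positive_nat_cases:
  fixes n :: nat
  assumes "n \<ge> 1"
  obtains "n = 1" | m where "n = 2 * m" "m \<ge> 1" | m where "n = 2 * m + 1" "m \<ge> 1"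
proof (cases "even n")
  case True
  then obtain m where "n = 2 * m" by blast
  with assms show ?thesis using that(2) by simp
next
  case False
  then obtain m where "n = 2 * m + 1" by (blast elim: oddE)
  with that(1,3) show ?thesis by (cases "m = 0") auto
qed

lemma stern_poly_nonzero: "n \<ge> 1 \<Longrightarrow> stern_poly n \<noteq> 0"
proof (induction n rule: less_induct)
  case (less n)
  from less.prems show ?case
  proof (cases rule: positive_nat_cases)
    case (2 m)
    then show ?thesis using less.IH[of m] by (simp add: stern_poly_even)
  next
    case (3 m)
    then have "stern_poly n = stern_poly m + stern_poly (m + 1)" using stern_poly_odd[of m] by simp
    then show ?thesis
      using 3 less.IH[of m] nonneg_coeffs_add_eq_0 nonneg_coeffs_stern_poly by auto
  qed simp
qed

lemma stern_deg_1 [simp]: "stern_deg (Suc 0) = 0"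
  by (simp add: stern_deg_def)

lemma stern_deg_even: "n \<ge> 1 \<Longrightarrow> stern_deg (2 * n) = stern_deg n + 1"
  using stern_poly_nonzero[of n] by (simp add: stern_deg_def stern_poly_even degree_mult_eq)

lemma stern_deg_odd:
  assumes "n \<ge> 1"
  shows "stern_deg (2 * n + 1) = max (stern_deg n) (stern_deg (n + 1))"
  unfolding stern_deg_def stern_poly_odd[OF assms]
  by (intro degree_add_nonneg_coeffs nonneg_coeffs_stern_poly)

lemma stern_deg_Suc_close:
  "n \<ge> 1 \<Longrightarrow> stern_deg (n + 1) \<le> stern_deg n + 1 \<and> stern_deg n \<le> stern_deg (n + 1) + 1"
proof (induction n rule: less_induct)
  case (less n)
  from less.prems show ?case
  proof (cases rule: positive_nat_cases)
    case 1
    then show ?thesis using stern_deg_even[of 1] by (simp add: numeral_2_eq_2)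
  next
    case (2 m)
    then show ?thesis using less.IH[of m] stern_deg_even[of m] stern_deg_odd[of m] by auto
  next
    case (3 m)
    have "n + 1 = 2 * (m + 1)" using 3 by simp
    then show ?thesis using 3 less.IH[of m] stern_deg_even[of "m + 1"] stern_deg_odd[of m] by auto
  qed
qed

lemma stern_deg_4n_plus_1: "n \<ge> 1 \<Longrightarrow> stern_deg (4 * n + 1) = stern_deg n + 1"
  using stern_deg_odd[of "2 * n"] stern_deg_even[of n] stern_deg_odd[of n] stern_deg_Suc_close[of n]
  by (simp add: mult.assoc[symmetric])

lemma stern_deg_4n_minus_1: "n \<ge> 1 \<Longrightarrow> stern_deg (4 * n - 1) = stern_deg n + 1"
proof -
  assume n: "n \<ge> 1"
  have split: "4 * n - 1 = 2 * (2 * n - 1) + 1" "2 * n - 1 + 1 = 2 * n" using n by auto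
  have "stern_deg (2 * n - 1) \<le> stern_deg n + 1"
  proof (cases "n = 1")
    case False
    then have "2 * n - 1 = 2 * (n - 1) + 1" "n - 1 \<ge> 1" "n - 1 + 1 = n" using n by auto
    then show ?thesis using stern_deg_odd[of "n - 1"] stern_deg_Suc_close[of "n - 1"] by auto
  qed simp
  then show ?thesis
    using split stern_deg_odd[of "2 * n - 1"] stern_deg_even[OF n] n by auto
qed

lemma stern_deg_parent:
  assumes "m \<ge> 2"
  obtains a where "a \<ge> 1" "m = 2 * a \<or> m = 4 * a - 1 \<or> m = 4 * a + 1"
    "stern_deg m = stern_deg a + 1"
proof -
  have "even m \<or> m mod 4 = 1 \<or> m mod 4 = 3" by presburger
  then consider "even m" | "m mod 4 = 1" | "m mod 4 = 3" by blast
  then show ?thesis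
  proof cases
    case 1
    then obtain a where "m = 2 * a" by blast
    with assms show ?thesis using that stern_deg_even[of a] by auto
  next
    case 2
    then have "m = 4 * (m div 4) + 1" "m div 4 \<ge> 1" using assms by presburger+
    then show ?thesis using that stern_deg_4n_plus_1 by metis
  next
    case 3
    then have "m = 4 * (m div 4 + 1) - 1" "m div 4 + 1 \<ge> 1" using assms by presburger+
    then show ?thesis using that stern_deg_4n_minus_1 by metis
  qed
qed

definition level :: "nat \<Rightarrow> nat set" where
  "level n = {a. 1 \<le> a \<and> stern_deg a = n}"

lemma level_0: "level 0 = {1}"
proof -
  have "m = 1" if "m \<ge> 1" "stern_deg m = 0" for m
    using that by (cases "m \<ge> 2") (auto elim: stern_deg_parent)
  then show ?thesis unfolding level_def by auto
qed

lemma level_Suc: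
  "level (Suc n) = (\<lambda>a. 2 * a) ` level n \<union> (\<lambda>a. 4 * a - 1) ` level n \<union> (\<lambda>a. 4 * a + 1) ` level n"
proof (intro equalityI subsetI)
  fix m assume "m \<in> level (Suc n)"
  then have m: "m \<ge> 1" "stern_deg m = Suc n" unfolding level_def by auto
  then have "m \<ge> 2" by (cases "m = 1") auto
  then obtain a where a: "a \<ge> 1" "m = 2 * a \<or> m = 4 * a - 1 \<or> m = 4 * a + 1"
    "stern_deg m = stern_deg a + 1" by (rule stern_deg_parent)
  then have "a \<in> level n" using m unfolding level_def by auto
  with a(2) show "m \<in> (\<lambda>a. 2 * a) ` level n \<union> (\<lambda>a. 4 * a - 1) ` level n \<union> (\<lambda>a. 4 * a + 1) ` level n"
    by blast
next
  fix m assume "m \<in> (\<lambda>a. 2 * a) ` level n \<union> (\<lambda>a. 4 * a - 1) ` level n \<union> (\<lambda>a. 4 * a + 1) ` level n"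
  then obtain a where "a \<in> level n" "m = 2 * a \<or> m = 4 * a - 1 \<or> m = 4 * a + 1" by blast
  then show "m \<in> level (Suc n)"
    using stern_deg_even[of a] stern_deg_4n_minus_1[of a] stern_deg_4n_plus_1[of a]
    unfolding level_def by auto
qed

lemma finite_level: "finite (level n)"
  by (induction n) (simp_all add: level_0 level_Suc)

lemma sum_three_images:
  assumes "finite A" "inj_on f A" "inj_on g A" "inj_on h A"
    "f ` A \<inter> g ` A = {}" "f ` A \<inter> h ` A = {}" "g ` A \<inter> h ` A = {}"
  shows "sum \<phi> (f ` A \<union> g ` A \<union> h ` A) = (\<Sum>a\<in>A. \<phi> (f a) + \<phi> (g a) + \<phi> (h a))"
proof -
  have "sum \<phi> (f ` A \<union> g ` A \<union> h ` A) = sum \<phi> (f ` A) + sum \<phi> (g ` A) + sum \<phi> (h ` A)"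
    using assms(1,5-7) by (simp add: sum.union_disjoint Int_Un_distrib2)
  also have "\<dots> = (\<Sum>a\<in>A. \<phi> (f a)) + (\<Sum>a\<in>A. \<phi> (g a)) + (\<Sum>a\<in>A. \<phi> (h a))"
    using assms(2-4) by (simp add: sum.reindex)
  finally show ?thesis by (simp add: sum.distrib)
qed

lemma power_sum_level_Suc:
  "(\<Sum>m\<in>level (Suc n). of_nat m ^ k :: 'a::comm_ring_1) =
   (\<Sum>a\<in>level n. (2 * of_nat a) ^ k + (4 * of_nat a - 1) ^ k + (4 * of_nat a + 1) ^ k)"
proof -
  have pos: "a \<ge> 1" if "a \<in> level n" for a using that by (simp add: level_def)
  have "(\<Sum>m\<in>level (Suc n). of_nat m ^ k :: 'a) =
        (\<Sum>a\<in>level n. of_nat (2 * a) ^ k + of_nat (4 * a - 1) ^ k + of_nat (4 * a + 1) ^ k)"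
    unfolding level_Suc
  proof (rule sum_three_images)
    have parity: "2 * a \<noteq> 4 * b - 1" "2 * a \<noteq> 4 * b + 1" "4 * b - 1 \<noteq> 4 * c + 1"
      if "b \<ge> 1" for a b c :: nat
      using that by presburger+
    show "(\<lambda>a. 2 * a) ` level n \<inter> (\<lambda>a. 4 * a - 1) ` level n = {}"
      "(\<lambda>a. 2 * a) ` level n \<inter> (\<lambda>a. 4 * a + 1) ` level n = {}"
      "(\<lambda>a. 4 * a - 1) ` level n \<inter> (\<lambda>a. 4 * a + 1) ` level n = {}"
      using parity pos by fastforce+
  qed (use pos finite_level in \<open>auto simp: inj_on_def\<close>)
  also have "\<dots> = (\<Sum>a\<in>level n. (2 * of_nat a) ^ k + (4 * of_nat a - 1) ^ k + (4 * of_nat a + 1) ^ k)"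
    by (rule sum.cong) (use pos in \<open>auto simp: of_nat_diff add.commute\<close>)
  finally show ?thesis .
qed

lemma binomial_4x_pm_1:
  fixes x :: "'a::comm_ring_1"
  shows "(4 * x + 1) ^ k + (4 * x - 1) ^ k =
         (\<Sum>j\<le>k. of_nat (k choose j) * (4 ^ j + (-1) ^ k * (-4) ^ j) * x ^ j)"
proof -
  have plus: "(4 * x + 1) ^ k = (\<Sum>j\<le>k. of_nat (k choose j) * 4 ^ j * x ^ j)"
    using binomial_ring[of "4 * x" 1 k] by (simp add: power_mult_distrib mult.assoc)
  have "(4 * x - 1) ^ k = (-1) ^ k * (-4 * x + 1) ^ k"
    by (simp flip: power_mult_distrib)
  also have "(-4 * x + 1) ^ k = (\<Sum>j\<le>k. of_nat (k choose j) * ((-4) ^ j * x ^ j))"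
    unfolding binomial_ring power_mult_distrib by simp
  also have "(-1) ^ k * \<dots> = (\<Sum>j\<le>k. of_nat (k choose j) * ((-1) ^ k * (-4) ^ j) * x ^ j)"
    by (simp add: sum_distrib_left mult_ac)
  finally show ?thesis
    unfolding plus by (simp add: sum.distrib[symmetric] distrib_left distrib_right mult_ac)
qed

(* Separating the top term j = k:  2^k + 2 * 4^k = 2^k (2^(k+1) + 1). *)
lemma children_power_identity:
  fixes x :: "'a::comm_ring_1"
  shows "(2 * x) ^ k + (4 * x - 1) ^ k + (4 * x + 1) ^ k =
         of_nat (2 ^ k * (2 ^ (k + 1) + 1)) * x ^ k
         + (\<Sum>j<k. of_nat (k choose j) * (4 ^ j + (-1) ^ k * (-4) ^ j) * x ^ j)"
proof -
  have four: "(4::'a) ^ k = 2 ^ k * 2 ^ k"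
    by (simp flip: power_mult_distrib)
  have "(-1::'a) ^ k * (-4) ^ k = ((-1) * (-4)) ^ k"
    by (simp only: power_mult_distrib)
  then have top: "(4::'a) ^ k + (-1) ^ k * (-4) ^ k = 2 * (2 ^ k * 2 ^ k)"
    by (simp add: four)
  have "(4 * x + 1) ^ k + (4 * x - 1) ^ k =
        2 * (2 ^ k * 2 ^ k) * x ^ k + (\<Sum>j<k. of_nat (k choose j) * (4 ^ j + (-1) ^ k * (-4) ^ j) * x ^ j)"
    unfolding binomial_4x_pm_1 lessThan_Suc_atMost[symmetric] sum.lessThan_Suc top by simp
  moreover have "(of_nat (2 ^ k * (2 ^ (k + 1) + 1)) :: 'a) = 2 ^ k + 2 * (2 ^ k * 2 ^ k)"
    by (simp add: algebra_simps)
  ultimately show ?thesis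
    by (simp add: power_mult_distrib algebra_simps)
qed

lemma S_level: "S k n = (\<Sum>a\<in>level n. a ^ k)"
  by (simp add: S_def level_def)

lemma S_0: "S k 0 = 1"
  by (simp add: S_level level_0)

lemma S_Suc:
  "(of_nat (S k (Suc n)) :: 'a::comm_ring_1) =
   of_nat (2 ^ k * (2 ^ (k + 1) + 1)) * of_nat (S k n)
   + (\<Sum>j<k. of_nat (k choose j) * (4 ^ j + (-1) ^ k * (-4) ^ j) * of_nat (S j n))"
proof -
  define c :: 'a where "c = of_nat (2 ^ k * (2 ^ (k + 1) + 1))"
  define b :: "nat \<Rightarrow> 'a" where "b j = of_nat (k choose j) * (4 ^ j + (-1) ^ k * (-4) ^ j)" for j
  have "(of_nat (S k (Suc n)) :: 'a) = (\<Sum>m\<in>level (Suc n). of_nat m ^ k)"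
    by (simp add: S_level)
  also have "\<dots> = (\<Sum>a\<in>level n. c * of_nat a ^ k + (\<Sum>j<k. b j * of_nat a ^ j))"
    unfolding power_sum_level_Suc children_power_identity c_def b_def ..
  also have "\<dots> = c * (\<Sum>a\<in>level n. of_nat a ^ k) + (\<Sum>j<k. b j * (\<Sum>a\<in>level n. of_nat a ^ j))"
    by (simp add: sum.distrib sum_distrib_left sum.swap[of _ "{..<k}"])
  finally show ?thesis
    by (simp add: S_level c_def b_def)
qed

lemma fps_linear_equation:
  fixes F P :: "'a::field fps"
  assumes "F = P + fps_const c * fps_X * F"
  shows "F = P / (1 - fps_const c * fps_X)"
proof -
  have "(1 - fps_const c * fps_X) $ 0 = 1" by simp
  then have nonzero: "1 - fps_const c * fps_X \<noteq> 0" by auto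
  have "F * (1 - fps_const c * fps_X) = F - fps_const c * fps_X * F"
    by (simp add: algebra_simps)
  also have "\<dots> = P" using assms by (simp add: diff_eq_eq)
  finally show ?thesis using nonzero by (metis nonzero_mult_div_cancel_right)
qed

lemma G_linear_equation:
  "G k = 1 + fps_X * (\<Sum>j<k. fps_const (of_nat (k choose j) * (4 ^ j + (-1) ^ k * (-4) ^ j)) * G j)
         + fps_const (of_nat (2 ^ k * (2 ^ (k + 1) + 1))) * fps_X * G k"
proof (rule fps_ext)
  fix n
  show "G k $ n = (1 + fps_X * (\<Sum>j<k. fps_const (of_nat (k choose j) * (4 ^ j + (-1) ^ k * (-4) ^ j)) * G j)
      + fps_const (of_nat (2 ^ k * (2 ^ (k + 1) + 1))) * fps_X * G k) $ n"
    using S_Suc[where 'a = rat, of k]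
    by (cases n) (simp_all add: G_def S_0 fps_sum_nth mult.assoc add.commute)
qed

theorem mainTheorem8:
  fixes k :: nat
  shows "G k =
    (1 + fps_X * (\<Sum>j<k. fps_const (of_nat (k choose j) * (4 ^ j + (-1) ^ k * (-4) ^ j)) * G j))
    / (1 - fps_const (of_nat (2 ^ k * (2 ^ (k + 1) + 1))) * fps_X)"
  using G_linear_equation by (rule fps_linear_equation)

end
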